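(* Let $r\ge 2$, let $P_1,\dots,P_r$ be nonempty point sets in $\mathbb{R}^d$, let $D=\max_{i\in[r]}\operatorname{diam}P_i$, and let $t\in[r-1]$. Let $a\in\mathbb{R}^d$ and assume that for all distinct $i_1,\dots,i_t\in[r]$ we have $a\in\operatorname{conv}(P_{i_1}\cup\dots\cup P_{i_t})$. Then there exists a transversal $T=\{p_1,\dots,p_r\}$ (with $p_i\in P_i$ for all $i$) such that \[ d(a,\operatorname{conv}T)\le \beta\cdot\frac{D}{\sqrt{r-t+1}},\qquad \beta=4\sqrt{\frac{\ln 4}{3}}. \]
   Context: $d(a,S)$ denotes Euclidean distance from a point to a set; $\operatorname{diam}$ is Euclidean diameter; $[m]=\{1,\dots,m\}$. *)

theory Defs
  imports "HOL-Analysis.Analysis"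
begin

end

theory Submission
  imports Defs
begin

(* Put m = r - t + 1. For every direction v the covering hypothesis forces at least m of the
   sets P_i to meet the halfspace {x. v.x <= v.a}; averaging one such point from each of m of
   them and separating shows that a lies in the convex hull of the averages (1/m) sum_{i in S} p_i
   with |S| = m and p_i in P_i. Hence a = sum_i l_i y_i with y_i in conv P_i, 0 <= l_i <= 1/m and
   sum_i l_i = 1. Replacing each y_i by some p_i in P_i lying on the side of y_i opposite to the
   error accumulated so far raises the squared error by at most l_i^2 D^2, so sum_i l_i p_i, a
   point of conv T, is within D (sum_i l_i^2)^(1/2) <= D / sqrt m of a: the bound holds even with
   constant 1 <= beta. *)

lemma exists_inner_le_if_mem_convex_hull:
  fixes P :: "'a::real_inner set"
  assumes "y \<in> convex hull P"
  shows "\<exists>q\<in>P. inner v q \<le> inner v y"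
proof (rule ccontr)
  assume "\<not> ?thesis"
  then have "convex hull P \<subseteq> {x. inner v y < inner v x}"
    by (intro hull_minimal convex_halfspace_gt) auto
  with assms show False by auto
qed

lemma mem_convex_hull_if_inner_le:
  fixes E :: "'a::euclidean_space set"
  assumes "compact E" and "\<And>v. \<exists>e\<in>E. inner v e \<le> inner v a"
  shows "a \<in> convex hull E"
proof (rule ccontr)
  assume "a \<notin> convex hull E"
  moreover have "closed (convex hull E)"
    using assms(1) by (intro compact_imp_closed compact_convex_hull)
  ultimately obtain v b where "inner v a < b" "\<forall>x\<in>convex hull E. b < inner v x"
    using separating_hyperplane_closed_point[OF convex_convex_hull] by blast
  moreover obtain e where "e \<in> E" "inner v e \<le> inner v a"
    using assms(2) by blast
  ultimately show False
    using hull_inc[of e E] by fastforce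
qed

definition transversal_averages :: "'i set \<Rightarrow> ('i \<Rightarrow> 'a::real_vector set) \<Rightarrow> nat \<Rightarrow> 'a set" where
  "transversal_averages I P m =
    {(1 / real m) *\<^sub>R (\<Sum>i\<in>S. p i) | S p. S \<subseteq> I \<and> card S = m \<and> (\<forall>i\<in>S. p i \<in> P i)}"

lemma finite_transversal_averages:
  assumes "finite I" "\<And>i. i \<in> I \<Longrightarrow> finite (P i)"
  shows "finite (transversal_averages I P m)"
proof -
  have "transversal_averages I P m
      \<subseteq> (\<lambda>(S, p). (1 / real m) *\<^sub>R (\<Sum>i\<in>S. p i)) ` (SIGMA S:Pow I. PiE S P)"
  proof
    fix x assume "x \<in> transversal_averages I P m"
    then obtain S p where "S \<subseteq> I" "\<forall>i\<in>S. p i \<in> P i" "x = (1 / real m) *\<^sub>R (\<Sum>i\<in>S. p i)"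
      unfolding transversal_averages_def by blast
    then show "x \<in> (\<lambda>(S, p). (1 / real m) *\<^sub>R (\<Sum>i\<in>S. p i)) ` (SIGMA S:Pow I. PiE S P)"
      by (intro image_eqI[of _ _ "(S, restrict p S)"]) auto
  qed
  moreover have "finite (SIGMA S:Pow I. PiE S P)"
    using assms by (intro finite_SigmaI finite_PiE) (auto intro: finite_subset)
  ultimately show ?thesis
    by (rule finite_subset[OF _ finite_imageI])
qed

lemma mem_convex_hull_transversal_averages:
  fixes P :: "'i \<Rightarrow> 'a::euclidean_space set"
  assumes "finite I" "\<And>i. i \<in> I \<Longrightarrow> finite (P i)" "0 < m" "m \<le> card I"
    and cover: "\<And>S. S \<subseteq> I \<Longrightarrow> card S + m = card I + 1 \<Longrightarrow> a \<in> convex hull (\<Union>i\<in>S. P i)"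
  shows "a \<in> convex hull (transversal_averages I P m)"
proof (rule mem_convex_hull_if_inner_le)
  show "compact (transversal_averages I P m)"
    using assms(1,2) by (intro finite_imp_compact finite_transversal_averages)
  fix v
  define G where "G = {i\<in>I. \<exists>q\<in>P i. inner v q \<le> inner v a}"
  have "G \<subseteq> I"
    unfolding G_def by auto
  have "m \<le> card G"
  proof (rule ccontr)
    assume "\<not> m \<le> card G"
    with \<open>G \<subseteq> I\<close> assms(1) have "card I + 1 - m \<le> card (I - G)"
      by (simp add: card_Diff_subset finite_subset)
    then obtain S where S: "S \<subseteq> I - G" "card S = card I + 1 - m"
      by (meson obtain_subset_with_card_n)
    then have "a \<in> convex hull (\<Union>i\<in>S. P i)"
      using assms(4) by (intro cover) auto
    then obtain q where "q \<in> (\<Union>i\<in>S. P i)" "inner v q \<le> inner v a"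
      using exists_inner_le_if_mem_convex_hull by blast
    with S show False
      unfolding G_def by auto
  qed
  then obtain S where S: "S \<subseteq> G" "card S = m"
    by (meson obtain_subset_with_card_n)
  then have "\<forall>i\<in>S. \<exists>q. q \<in> P i \<and> inner v q \<le> inner v a"
    unfolding G_def by blast
  then obtain p where p: "\<forall>i\<in>S. p i \<in> P i \<and> inner v (p i) \<le> inner v a"
    by metis
  have "(1 / real m) *\<^sub>R (\<Sum>i\<in>S. p i) \<in> transversal_averages I P m"
    unfolding transversal_averages_def using S p \<open>G \<subseteq> I\<close> by blast
  moreover have "inner v ((1 / real m) *\<^sub>R (\<Sum>i\<in>S. p i)) \<le> inner v a"
  proof -
    have "inner v ((1 / real m) *\<^sub>R (\<Sum>i\<in>S. p i)) = (1 / real m) * (\<Sum>i\<in>S. inner v (p i))"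
      by (simp add: inner_sum_right)
    also have "\<dots> \<le> (1 / real m) * (\<Sum>i\<in>S. inner v a)"
      using p by (intro mult_left_mono sum_mono) auto
    also have "\<dots> = inner v a"
      using S assms(3) by simp
    finally show ?thesis .
  qed
  ultimately show "\<exists>e\<in>transversal_averages I P m. inner v e \<le> inner v a"
    by blast
qed

definition capped_combinations :: "'i set \<Rightarrow> ('i \<Rightarrow> 'a::real_vector set) \<Rightarrow> real \<Rightarrow> 'a set" where
  "capped_combinations I K c =
    {\<Sum>i\<in>I. l i *\<^sub>R y i | l y. (\<forall>i\<in>I. 0 \<le> l i \<and> l i \<le> c \<and> y i \<in> K i) \<and> sum l I = 1}"

lemma convex_scaleR_add_eq:
  assumes "convex K" "x \<in> K" "y \<in> K" "0 \<le> a" "0 \<le> b"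
  shows "\<exists>z\<in>K. a *\<^sub>R x + b *\<^sub>R y = (a + b) *\<^sub>R z"
proof (cases "a + b = 0")
  case True
  with assms have "a = 0" "b = 0" by linarith+
  with assms show ?thesis by auto
next
  case False
  have "(a / (a + b)) *\<^sub>R x + (b / (a + b)) *\<^sub>R y \<in> K"
    using assms False by (intro convexD) (auto simp: add_divide_distrib[symmetric])
  moreover have "a *\<^sub>R x + b *\<^sub>R y = (a + b) *\<^sub>R ((a / (a + b)) *\<^sub>R x + (b / (a + b)) *\<^sub>R y)"
    using False by (simp add: scaleR_add_right)
  ultimately show ?thesis by blast
qed

lemma convex_capped_combinations:
  assumes "\<And>i. i \<in> I \<Longrightarrow> convex (K i)"
  shows "convex (capped_combinations I K c)"
proof (rule convexI)
  fix x x' and u v :: real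
  assume "x \<in> capped_combinations I K c" "x' \<in> capped_combinations I K c"
    and uv: "0 \<le> u" "0 \<le> v" "u + v = 1"
  then obtain l y l' y' where
    l: "\<forall>i\<in>I. 0 \<le> l i \<and> l i \<le> c \<and> y i \<in> K i" "sum l I = 1" "x = (\<Sum>i\<in>I. l i *\<^sub>R y i)" and
    l': "\<forall>i\<in>I. 0 \<le> l' i \<and> l' i \<le> c \<and> y' i \<in> K i" "sum l' I = 1" "x' = (\<Sum>i\<in>I. l' i *\<^sub>R y' i)"
    unfolding capped_combinations_def by blast
  define L where "L i = u * l i + v * l' i" for i
  have "\<forall>i\<in>I. \<exists>z\<in>K i. (u * l i) *\<^sub>R y i + (v * l' i) *\<^sub>R y' i = L i *\<^sub>R z"
    unfolding L_def using assms l(1) l'(1) uv by (intro ballI convex_scaleR_add_eq) auto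
  then obtain z where z: "\<forall>i\<in>I. z i \<in> K i \<and> (u * l i) *\<^sub>R y i + (v * l' i) *\<^sub>R y' i = L i *\<^sub>R z i"
    by metis
  have "\<forall>i\<in>I. 0 \<le> L i \<and> L i \<le> c \<and> z i \<in> K i"
  proof
    fix i assume "i \<in> I"
    then have "u * l i \<le> u * c" "v * l' i \<le> v * c" "0 \<le> u * l i" "0 \<le> v * l' i"
      using l(1) l'(1) uv by (auto intro: mult_left_mono)
    moreover have "u * c + v * c = c"
      using uv(3) by (metis distrib_right mult_1)
    ultimately show "0 \<le> L i \<and> L i \<le> c \<and> z i \<in> K i"
      using z \<open>i \<in> I\<close> unfolding L_def by auto
  qed
  moreover have "sum L I = 1"
    unfolding L_def using l(2) l'(2) uv(3) by (simp add: sum.distrib sum_distrib_left[symmetric])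
  moreover have "u *\<^sub>R x + v *\<^sub>R x' = (\<Sum>i\<in>I. L i *\<^sub>R z i)"
    unfolding l(3) l'(3) scaleR_sum_right sum.distrib[symmetric] using z
    by (intro sum.cong) auto
  ultimately show "u *\<^sub>R x + v *\<^sub>R x' \<in> capped_combinations I K c"
    unfolding capped_combinations_def by blast
qed

lemma transversal_averages_subset_capped_combinations:
  assumes "finite I" "\<And>i. i \<in> I \<Longrightarrow> P i \<noteq> {}" "0 < m"
  shows "transversal_averages I P m \<subseteq> capped_combinations I (\<lambda>i. convex hull P i) (1 / real m)"
proof
  fix x assume "x \<in> transversal_averages I P m"
  then obtain S p where S: "S \<subseteq> I" "card S = m" "\<forall>i\<in>S. p i \<in> P i"
    and x: "x = (1 / real m) *\<^sub>R (\<Sum>i\<in>S. p i)"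
    unfolding transversal_averages_def by blast
  define l where "l i = (if i \<in> S then 1 / real m else 0)" for i
  define y where "y i = (if i \<in> S then p i else (SOME q. q \<in> P i))" for i
  have "\<forall>i\<in>I. 0 \<le> l i \<and> l i \<le> 1 / real m \<and> y i \<in> convex hull P i"
    using S assms(2) by (auto simp: l_def y_def some_in_eq intro: hull_inc)
  moreover have "sum l I = 1"
    using S assms(1,3) by (simp add: l_def sum.If_cases Int_absorb1)
  moreover have "x = (\<Sum>i\<in>I. l i *\<^sub>R y i)"
    using S assms(1) unfolding x l_def y_def
    by (simp add: if_distrib sum.If_cases Int_absorb1 scaleR_sum_right)
  ultimately show "x \<in> capped_combinations I (\<lambda>i. convex hull P i) (1 / real m)"
    unfolding capped_combinations_def by blast
qed

lemma dist_le_diameter_convex_hull: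
  fixes P :: "'a::real_normed_vector set"
  assumes "bounded P" "q \<in> P" "y \<in> convex hull P"
  shows "dist q y \<le> diameter P"
proof -
  have "P \<subseteq> cball q (diameter P)"
    using assms by (auto intro: diameter_bounded_bound)
  then have "convex hull P \<subseteq> cball q (diameter P)"
    by (intro hull_minimal convex_cball)
  with assms(3) show ?thesis by auto
qed

lemma exists_point_norm_add_le:
  fixes P :: "'a::real_inner set"
  assumes "bounded P" "y \<in> convex hull P"
  shows "\<exists>q\<in>P. (norm (s + l *\<^sub>R (q - y)))\<^sup>2 \<le> (norm s)\<^sup>2 + l\<^sup>2 * (diameter P)\<^sup>2"
proof -
  obtain q where q: "q \<in> P" "inner (l *\<^sub>R s) q \<le> inner (l *\<^sub>R s) y"
    using exists_inner_le_if_mem_convex_hull[OF assms(2)] by blast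
  have "norm (q - y) \<le> diameter P"
    using dist_le_diameter_convex_hull[OF assms(1) q(1) assms(2)] by (simp add: dist_norm)
  then have "l\<^sup>2 * (norm (q - y))\<^sup>2 \<le> l\<^sup>2 * (diameter P)\<^sup>2"
    by (intro mult_left_mono power_mono) auto
  moreover have "inner s (l *\<^sub>R (q - y)) \<le> 0"
    using q(2) by (simp add: inner_diff_right algebra_simps)
  moreover have "(norm (s + l *\<^sub>R (q - y)))\<^sup>2
      = (norm s)\<^sup>2 + 2 * inner s (l *\<^sub>R (q - y)) + l\<^sup>2 * (norm (q - y))\<^sup>2"
    using dot_norm[of s "l *\<^sub>R (q - y)"] by (simp add: power_mult_distrib)
  ultimately show ?thesis
    using q by (intro bexI[of _ q]) auto
qed

lemma exists_transversal_norm_sum_le: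
  fixes P :: "'i \<Rightarrow> 'a::real_inner set"
  assumes "finite I"
    and "\<And>i. i \<in> I \<Longrightarrow> bounded (P i)" "\<And>i. i \<in> I \<Longrightarrow> diameter (P i) \<le> D"
    and "\<And>i. i \<in> I \<Longrightarrow> y i \<in> convex hull P i"
  shows "\<exists>p. (\<forall>i\<in>I. p i \<in> P i) \<and>
    (norm (\<Sum>i\<in>I. l i *\<^sub>R (p i - y i)))\<^sup>2 \<le> D\<^sup>2 * (\<Sum>i\<in>I. (l i)\<^sup>2)"
  using assms
proof (induction I rule: finite_induct)
  case empty
  show ?case by simp
next
  case (insert j I)
  then obtain p where p: "\<forall>i\<in>I. p i \<in> P i"
    and IH: "(norm (\<Sum>i\<in>I. l i *\<^sub>R (p i - y i)))\<^sup>2 \<le> D\<^sup>2 * (\<Sum>i\<in>I. (l i)\<^sup>2)"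
    by auto
  define s where "s = (\<Sum>i\<in>I. l i *\<^sub>R (p i - y i))"
  obtain q where q: "q \<in> P j"
    and step: "(norm (s + l j *\<^sub>R (q - y j)))\<^sup>2 \<le> (norm s)\<^sup>2 + (l j)\<^sup>2 * (diameter (P j))\<^sup>2"
    using exists_point_norm_add_le[where P = "P j" and y = "y j" and s = s and l = "l j"] insert.prems
    by auto
  have "(l j)\<^sup>2 * (diameter (P j))\<^sup>2 \<le> (l j)\<^sup>2 * D\<^sup>2"
    using insert.prems by (intro mult_left_mono power_mono diameter_ge_0) auto
  with step have "(norm (s + l j *\<^sub>R (q - y j)))\<^sup>2 \<le> (norm s)\<^sup>2 + (l j)\<^sup>2 * D\<^sup>2"
    by linarith
  also have "\<dots> \<le> D\<^sup>2 * (\<Sum>i\<in>I. (l i)\<^sup>2) + D\<^sup>2 * (l j)\<^sup>2"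
    using IH unfolding s_def by (simp add: mult.commute)
  also have "\<dots> = D\<^sup>2 * (\<Sum>i\<in>insert j I. (l i)\<^sup>2)"
    using insert.hyps by (simp add: distrib_left)
  finally have bound: "(norm (s + l j *\<^sub>R (q - y j)))\<^sup>2 \<le> D\<^sup>2 * (\<Sum>i\<in>insert j I. (l i)\<^sup>2)" .
  have "(\<Sum>i\<in>I. l i *\<^sub>R ((p(j := q)) i - y i)) = s"
    unfolding s_def using insert.hyps by (intro sum.cong) auto
  then have sum_eq: "(\<Sum>i\<in>insert j I. l i *\<^sub>R ((p(j := q)) i - y i)) = s + l j *\<^sub>R (q - y j)"
    using insert.hyps by simp
  show ?case
  proof (intro exI conjI)
    show "\<forall>i\<in>insert j I. (p(j := q)) i \<in> P i"
      using p q by simp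
    show "(norm (\<Sum>i\<in>insert j I. l i *\<^sub>R ((p(j := q)) i - y i)))\<^sup>2
        \<le> D\<^sup>2 * (\<Sum>i\<in>insert j I. (l i)\<^sup>2)"
      using bound by (simp only: sum_eq)
  qed
qed

lemma exists_transversal_infdist_le:
  fixes P :: "'i \<Rightarrow> 'a::real_inner set"
  assumes "finite I" "a \<in> capped_combinations I (\<lambda>i. convex hull P i) c"
    and "\<And>i. i \<in> I \<Longrightarrow> bounded (P i)" "\<And>i. i \<in> I \<Longrightarrow> diameter (P i) \<le> D"
  shows "\<exists>p. (\<forall>i\<in>I. p i \<in> P i) \<and> infdist a (convex hull (p ` I)) \<le> D * sqrt c"
proof -
  obtain l y where l: "\<forall>i\<in>I. 0 \<le> l i \<and> l i \<le> c \<and> y i \<in> convex hull P i" "sum l I = 1"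
    and a: "a = (\<Sum>i\<in>I. l i *\<^sub>R y i)"
    using assms(2) unfolding capped_combinations_def by blast
  obtain p where p: "\<forall>i\<in>I. p i \<in> P i"
    and err: "(norm (\<Sum>i\<in>I. l i *\<^sub>R (p i - y i)))\<^sup>2 \<le> D\<^sup>2 * (\<Sum>i\<in>I. (l i)\<^sup>2)"
    using exists_transversal_norm_sum_le[of I P D y l] assms(1,3,4) l(1) by auto
  obtain i0 where "i0 \<in> I"
    using l(2) by fastforce
  then have "0 \<le> D" "0 \<le> c"
    using assms(3,4) l(1) by (meson diameter_ge_0 order_trans)+
  have "(\<Sum>i\<in>I. (l i)\<^sup>2) \<le> (\<Sum>i\<in>I. c * l i)"
    using l(1) by (intro sum_mono) (auto simp: power2_eq_square intro: mult_right_mono)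
  also have "\<dots> = c"
    using l(2) by (simp add: sum_distrib_left[symmetric])
  finally have "D\<^sup>2 * (\<Sum>i\<in>I. (l i)\<^sup>2) \<le> D\<^sup>2 * c"
    by (rule mult_left_mono) simp
  also have "\<dots> = (D * sqrt c)\<^sup>2"
    using \<open>0 \<le> c\<close> by (simp add: power_mult_distrib)
  finally have "(norm (\<Sum>i\<in>I. l i *\<^sub>R (p i - y i)))\<^sup>2 \<le> (D * sqrt c)\<^sup>2"
    using err by linarith
  moreover have "0 \<le> D * sqrt c"
    using \<open>0 \<le> D\<close> \<open>0 \<le> c\<close> by simp
  ultimately have "norm (\<Sum>i\<in>I. l i *\<^sub>R (p i - y i)) \<le> D * sqrt c"
    by (rule power2_le_imp_le)
  moreover have "dist a (\<Sum>i\<in>I. l i *\<^sub>R p i) = norm (\<Sum>i\<in>I. l i *\<^sub>R (p i - y i))"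
    unfolding a dist_norm by (simp add: scaleR_diff_right sum_subtractf norm_minus_commute)
  moreover have "(\<Sum>i\<in>I. l i *\<^sub>R p i) \<in> convex hull (p ` I)"
    using l p assms(1) by (intro convex_sum) (auto intro: hull_inc)
  ultimately have "infdist a (convex hull (p ` I)) \<le> D * sqrt c"
    using infdist_le[of "\<Sum>i\<in>I. l i *\<^sub>R p i" "convex hull (p ` I)" a] by linarith
  with p show ?thesis
    by blast
qed

lemma one_le_four_mult_sqrt_ln_four_div_three: "1 \<le> 4 * sqrt (ln 4 / 3 :: real)"
proof -
  have "1 \<le> ln (4::real)"
    using exp_le by (subst ln_ge_iff) auto
  then have "sqrt (1 / 16) \<le> sqrt (ln 4 / 3 :: real)"
    by (intro real_sqrt_le_mono) auto
  then show ?thesis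
    by (simp add: real_sqrt_divide)
qed

theorem theorem2p2:
  fixes P :: "nat \<Rightarrow> 'a::euclidean_space set"
    and r t :: nat and a :: 'a and D :: real
  assumes r_ge: "r \<ge> 2"
    and fin: "\<And>i. i \<in> {1..r} \<Longrightarrow> finite (P i)"
    and ne: "\<And>i. i \<in> {1..r} \<Longrightarrow> P i \<noteq> {}"
    and D_def: "D = (MAX i\<in>{1..r}. diameter (P i))"
    and t_range: "t \<in> {1..r-1}"
    and cover: "\<And>S. S \<subseteq> {1..r} \<Longrightarrow> card S = t \<Longrightarrow>
                   a \<in> convex hull (\<Union>i\<in>S. P i)"
  shows "\<exists>p::nat \<Rightarrow> 'a. (\<forall>i\<in>{1..r}. p i \<in> P i) \<and>
           infdist a (convex hull (p ` {1..r}))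
             \<le> (4 * sqrt (ln 4 / 3)) * D / sqrt (real (r - t + 1))"
proof -
  define m where "m = r - t + 1"
  have m: "0 < m" "m \<le> card {1..r}"
    using t_range unfolding m_def by auto
  have diam: "diameter (P i) \<le> D" if "i \<in> {1..r}" for i
    unfolding D_def using that by (intro Max_ge) auto
  have "a \<in> convex hull (transversal_averages {1..r} P m)"
  proof (rule mem_convex_hull_transversal_averages)
    fix S assume "S \<subseteq> {1..r}" "card S + m = card {1..r} + 1"
    with t_range show "a \<in> convex hull (\<Union>i\<in>S. P i)"
      unfolding m_def by (intro cover) auto
  qed (use fin m in auto)
  also have "\<dots> \<subseteq> capped_combinations {1..r} (\<lambda>i. convex hull P i) (1 / real m)"
    using ne m(1)
    by (intro hull_minimal transversal_averages_subset_capped_combinations convex_capped_combinations) auto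
  finally obtain p where p: "\<forall>i\<in>{1..r}. p i \<in> P i"
    and dist: "infdist a (convex hull (p ` {1..r})) \<le> D * sqrt (1 / real m)"
    using exists_transversal_infdist_le[of "{1..r}" a P "1 / real m" D] fin diam
    by (auto intro: finite_imp_bounded)
  have "0 \<le> D"
    using diam[of 1] diameter_ge_0[OF finite_imp_bounded[OF fin[of 1]]] r_ge by auto
  have "D * sqrt (1 / real m) = 1 * D / sqrt (real m)"
    by (simp add: real_sqrt_divide)
  also have "\<dots> \<le> (4 * sqrt (ln 4 / 3)) * D / sqrt (real m)"
    using \<open>0 \<le> D\<close> one_le_four_mult_sqrt_ln_four_div_three
    by (intro divide_right_mono mult_right_mono) auto
  finally show ?thesis
    using p dist unfolding m_def by (meson order_trans)
qed

end
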